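(* Let $(E\to M,\rho,\langle\cdot,\cdot\rangle,\circ)$ be a Courant algebroid and $(\mathbf I,\mathbf J,\mathbf K)$ an almost hypercomplex structure on $E$ with $N_{\mathbf I,\mathbf J}=0$. Then the hypercomplex connection $$\nabla_XY=-\tfrac12\mathbf K\big(\mathbf JY\circ\mathbf IX-\mathbf J(Y\circ\mathbf IX)-\mathbf I(\mathbf JY\circ X)+\mathbf J\mathbf I(Y\circ X)\big)$$ satisfies $\nabla\mathbf I=\nabla\mathbf J=\nabla\mathbf K=0$ and, for all $X,Y\in\Gamma(E)$, $$T(X,Y)=\mathbf ID\langle X,\mathbf IY\rangle+\mathbf JD\langle X,\mathbf JY\rangle+\mathbf KD\langle X,\mathbf KY\rangle.$$
   Context: A Courant algebroid $(E\to M,\rho,\langle\cdot,\cdot\rangle,\circ)$ consists of a real vector bundle $E\to M$ over a smooth manifold, a nondegenerate symmetric fiberwise bilinear pairing $\langle\cdot,\cdot\rangle$ on $E$, a vector bundle map $\rho:E\to TM$ (the anchor), and an $\mathbb R$-bilinear operation $\circ$ on $\Gamma(E)$ (the Dorfman bracket) such that for all $f\in C^\infty(M)$, $x,y,z\in\Gamma(E)$: $x\circ(y\circ z)=(x\circ y)\circ z+y\circ(x\circ z)$; $\rho(x\circ y)=[\rho(x),\rho(y)]$; $x\circ(fy)=(\rho(x)f)y+f(x\circ y)$; $x\circ y+y\circ x=2D\langle x,y\rangle$; $(Df)\circ x=0$; $\rho(x)\langle y,z\rangle=\langle x\circ y,z\rangle+\langle y,x\circ z\rangle$. Here $D:C^\infty(M)\to\Gamma(E)$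 is the $\mathbb R$-linear map defined by $\langle Df,x\rangle=\tfrac12\rho(x)f$. The Courant bracket is $[\![x,y]\!]=\tfrac12(x\circ y-y\circ x)$. For vector bundle endomorphisms $F,G$ of $E$ (over $\mathrm{id}_M$), the Nijenhuis concomitant is the tensor $N_{F,G}:E\otimes E\to E$ given by $N_{F,G}(X,Y)=FX\circ GY-F(X\circ GY)-G(FX\circ Y)+FG(X\circ Y)+GX\circ FY-G(X\circ FY)-F(GX\circ Y)+GF(X\circ Y)$. An almost hypercomplex structure on $E$ is a triple $(\mathbf I,\mathbf J,\mathbf K)$ of vector bundle endomorphisms of $E$ over $\mathrm{id}_M$, each orthogonal for $\langle\cdot,\cdot\rangle$, with $\mathbf I^2=\mathbf J^2=\mathbf K^2=\mathbf I\mathbf J\mathbf K=-1$. Given an almost hypercomplex structure, for $f\in C^\infty(M)$ and $X,Y\in\Gamma(E)$ set $\Delta_f(X,Y)=\langle X,Y\rangle Df+\langle\mathbf IX,Y\rangle\mathbf I Df+\langle\mathbf JX,Y\rangle\mathbf JDf+\langle\mathbf KX,Y\rangle\mathbf KDf$. A hypercomplex connection is an $\mathbb R$-bilinear map $\Gamma(E)\times\Gamma(E)\to\Gamma(E)$, $(X,Y)\mapsto\nabla_XY$, with $\nabla_{fX}Y=f\nabla_XY$ and $\nabla_X(fY)=(\rho(X)f)Y+f\nabla_XY-\Delta_f(X,Y)$. Its torsion is $T(X,Y)=\nabla_XY-\nabla_YX-[\![X,Y]\!]$. For an endomorphism $P$ of $E$, $(\nabla_XP)Y:=\nabla_X(PY)-P(\nabla_XY)$,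 and $\nabla P=0$ means this vanishes for all $X,Y$. *)

theory Defs
  imports Main "HOL.Real_Vector_Spaces"
begin

text \<open>The type 'f plays the role of the commutative real algebra C^infinity(M);
  the type 's plays the role of the space of sections Gamma(E), a module over 'f
  (via sm) whose real-vector-space structure is the restriction of scalars.
  Vector bundle endomorphisms over id_M correspond to 'f-linear maps of sections;
  rho x is the vector field rho(x), acting as a derivation on 'f.\<close>

definition is_fmodule :: "('f::{comm_ring_1,real_algebra_1} \<Rightarrow> 's::real_vector \<Rightarrow> 's) \<Rightarrow> bool" where
  "is_fmodule sm \<longleftrightarrow>
     (\<forall>a b x. sm (a + b) x = sm a x + sm b x) \<and>
     (\<forall>a x y. sm a (x + y) = sm a x + sm a y) \<and>
     (\<forall>a b x. sm (a * b) x = sm a (sm b x)) \<and>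
     (\<forall>x. sm 1 x = x) \<and>
     (\<forall>r x. sm (of_real r) x = r *\<^sub>R x)"

definition is_derivation :: "('f::{comm_ring_1,real_algebra_1} \<Rightarrow> 'f) \<Rightarrow> bool" where
  "is_derivation v \<longleftrightarrow>
     (\<forall>f g. v (f + g) = v f + v g) \<and>
     (\<forall>r f. v (r *\<^sub>R f) = r *\<^sub>R v f) \<and>
     (\<forall>f g. v (f * g) = f * v g + g * v f)"

definition courant_algebroid ::
  "('f::{comm_ring_1,real_algebra_1} \<Rightarrow> 's::real_vector \<Rightarrow> 's) \<Rightarrow> ('s \<Rightarrow> 'f \<Rightarrow> 'f) \<Rightarrow>
   ('s \<Rightarrow> 's \<Rightarrow> 'f) \<Rightarrow> ('s \<Rightarrow> 's \<Rightarrow> 's) \<Rightarrow> ('f \<Rightarrow> 's) \<Rightarrow> bool" where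
  "courant_algebroid sm rho pair dorf D \<longleftrightarrow>
     is_fmodule sm \<and>
     \<comment> \<open>anchor: a vector bundle map E -> TM\<close>
     (\<forall>x. is_derivation (rho x)) \<and>
     (\<forall>x y g. rho (x + y) g = rho x g + rho y g) \<and>
     (\<forall>f x g. rho (sm f x) g = f * rho x g) \<and>
     \<comment> \<open>pairing: symmetric, fiberwise bilinear, nondegenerate\<close>
     (\<forall>x y. pair x y = pair y x) \<and>
     (\<forall>x x' y. pair (x + x') y = pair x y + pair x' y) \<and>
     (\<forall>f x y. pair (sm f x) y = f * pair x y) \<and>
     (\<forall>x. (\<forall>y. pair x y = 0) \<longrightarrow> x = 0) \<and>
     \<comment> \<open>Dorfman bracket is R-bilinear\<close>
     (\<forall>x x' y. dorf (x + x') y = dorf x y + dorf x' y) \<and>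
     (\<forall>x y y'. dorf x (y + y') = dorf x y + dorf x y') \<and>
     (\<forall>r x y. dorf (r *\<^sub>R x) y = r *\<^sub>R dorf x y) \<and>
     (\<forall>r x y. dorf x (r *\<^sub>R y) = r *\<^sub>R dorf x y) \<and>
     \<comment> \<open>D is defined by <Df, x> = 1/2 rho(x) f\<close>
     (\<forall>f x. pair (D f) x = (1/2) *\<^sub>R rho x f) \<and>
     \<comment> \<open>the axioms\<close>
     (\<forall>x y z. dorf x (dorf y z) = dorf (dorf x y) z + dorf y (dorf x z)) \<and>
     (\<forall>x y g. rho (dorf x y) g = rho x (rho y g) - rho y (rho x g)) \<and>
     (\<forall>x f y. dorf x (sm f y) = sm (rho x f) y + sm f (dorf x y)) \<and>
     (\<forall>x y. dorf x y + dorf y x = 2 *\<^sub>R D (pair x y)) \<and>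
     (\<forall>f x. dorf (D f) x = 0) \<and>
     (\<forall>x y z. rho x (pair y z) = pair (dorf x y) z + pair y (dorf x z))"

definition courant_bracket :: "('s::real_vector \<Rightarrow> 's \<Rightarrow> 's) \<Rightarrow> 's \<Rightarrow> 's \<Rightarrow> 's" where
  "courant_bracket dorf x y = (1/2) *\<^sub>R (dorf x y - dorf y x)"

text \<open>Vector bundle endomorphism of E over id_M, i.e. C-infinity-linear map of sections.\<close>
definition is_endo :: "('f::{comm_ring_1,real_algebra_1} \<Rightarrow> 's::real_vector \<Rightarrow> 's) \<Rightarrow> ('s \<Rightarrow> 's) \<Rightarrow> bool" where
  "is_endo sm F \<longleftrightarrow> (\<forall>x y. F (x + y) = F x + F y) \<and> (\<forall>f x. F (sm f x) = sm f (F x))"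

definition is_orthogonal :: "('s \<Rightarrow> 's \<Rightarrow> 'f) \<Rightarrow> ('s \<Rightarrow> 's) \<Rightarrow> bool" where
  "is_orthogonal pair F \<longleftrightarrow> (\<forall>x y. pair (F x) (F y) = pair x y)"

definition almost_hypercomplex ::
  "('f::{comm_ring_1,real_algebra_1} \<Rightarrow> 's::real_vector \<Rightarrow> 's) \<Rightarrow> ('s \<Rightarrow> 's \<Rightarrow> 'f) \<Rightarrow>
   ('s \<Rightarrow> 's) \<Rightarrow> ('s \<Rightarrow> 's) \<Rightarrow> ('s \<Rightarrow> 's) \<Rightarrow> bool" where
  "almost_hypercomplex sm pair I J K \<longleftrightarrow>
     is_endo sm I \<and> is_endo sm J \<and> is_endo sm K \<and>
     is_orthogonal pair I \<and> is_orthogonal pair J \<and> is_orthogonal pair K \<and>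
     (\<forall>x. I (I x) = - x) \<and> (\<forall>x. J (J x) = - x) \<and> (\<forall>x. K (K x) = - x) \<and>
     (\<forall>x. I (J (K x)) = - x)"

definition nijenhuis :: "('s::real_vector \<Rightarrow> 's \<Rightarrow> 's) \<Rightarrow> ('s \<Rightarrow> 's) \<Rightarrow> ('s \<Rightarrow> 's) \<Rightarrow> 's \<Rightarrow> 's \<Rightarrow> 's" where
  "nijenhuis dorf F G X Y =
     dorf (F X) (G Y) - F (dorf X (G Y)) - G (dorf (F X) Y) + F (G (dorf X Y))
   + dorf (G X) (F Y) - G (dorf X (F Y)) - F (dorf (G X) Y) + G (F (dorf X Y))"

definition Delta ::
  "('f::{comm_ring_1,real_algebra_1} \<Rightarrow> 's::real_vector \<Rightarrow> 's) \<Rightarrow> ('s \<Rightarrow> 's \<Rightarrow> 'f) \<Rightarrow> ('f \<Rightarrow> 's) \<Rightarrow>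
   ('s \<Rightarrow> 's) \<Rightarrow> ('s \<Rightarrow> 's) \<Rightarrow> ('s \<Rightarrow> 's) \<Rightarrow> 'f \<Rightarrow> 's \<Rightarrow> 's \<Rightarrow> 's" where
  "Delta sm pair D I J K f X Y =
     sm (pair X Y) (D f) + sm (pair (I X) Y) (I (D f))
   + sm (pair (J X) Y) (J (D f)) + sm (pair (K X) Y) (K (D f))"

definition hypercomplex_connection ::
  "('f::{comm_ring_1,real_algebra_1} \<Rightarrow> 's::real_vector \<Rightarrow> 's) \<Rightarrow> ('s \<Rightarrow> 'f \<Rightarrow> 'f) \<Rightarrow>
   ('s \<Rightarrow> 's \<Rightarrow> 'f) \<Rightarrow> ('f \<Rightarrow> 's) \<Rightarrow>
   ('s \<Rightarrow> 's) \<Rightarrow> ('s \<Rightarrow> 's) \<Rightarrow> ('s \<Rightarrow> 's) \<Rightarrow> ('s \<Rightarrow> 's \<Rightarrow> 's) \<Rightarrow> bool" where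
  "hypercomplex_connection sm rho pair D I J K nabla \<longleftrightarrow>
     (\<forall>X X' Y. nabla (X + X') Y = nabla X Y + nabla X' Y) \<and>
     (\<forall>X Y Y'. nabla X (Y + Y') = nabla X Y + nabla X Y') \<and>
     (\<forall>r X Y. nabla (r *\<^sub>R X) Y = r *\<^sub>R nabla X Y) \<and>
     (\<forall>r X Y. nabla X (r *\<^sub>R Y) = r *\<^sub>R nabla X Y) \<and>
     (\<forall>f X Y. nabla (sm f X) Y = sm f (nabla X Y)) \<and>
     (\<forall>f X Y. nabla X (sm f Y) = sm (rho X f) Y + sm f (nabla X Y) - Delta sm pair D I J K f X Y)"

definition torsion :: "('s::real_vector \<Rightarrow> 's \<Rightarrow> 's) \<Rightarrow> ('s \<Rightarrow> 's \<Rightarrow> 's) \<Rightarrow> 's \<Rightarrow> 's \<Rightarrow> 's" where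
  "torsion dorf nabla X Y = nabla X Y - nabla Y X - courant_bracket dorf X Y"

definition cov_deriv :: "('s::real_vector \<Rightarrow> 's \<Rightarrow> 's) \<Rightarrow> ('s \<Rightarrow> 's) \<Rightarrow> 's \<Rightarrow> 's \<Rightarrow> 's" where
  "cov_deriv nabla P X Y = nabla X (P Y) - P (nabla X Y)"

definition hc_nabla :: "('s::real_vector \<Rightarrow> 's \<Rightarrow> 's) \<Rightarrow> ('s \<Rightarrow> 's) \<Rightarrow> ('s \<Rightarrow> 's) \<Rightarrow> ('s \<Rightarrow> 's) \<Rightarrow> 's \<Rightarrow> 's \<Rightarrow> 's" where
  "hc_nabla dorf I J K X Y =
     - (1/2) *\<^sub>R K (dorf (J Y) (I X) - J (dorf Y (I X)) - I (dorf (J Y) X) + J (I (dorf Y X)))"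

end

theory Submission
  imports Defs
begin

(* The connection  nabla_X Y = -1/2 K h(Y,X),  with h(Y,X) = JY o IX - J(Y o IX) - I(JY o X) + JI(Y o X)
   one half of the Nijenhuis concomitant N_{J,I}(Y,X), is studied in three layers.
   (1) Pure algebra: for ANY real-bilinear bracket and real-linear I, J, K obeying the quaternion
       relations, nabla J = 0 holds identically and nabla K is an explicit combination of values of
       N_{I,J}; hence N_{I,J} = 0 gives nabla K = 0, and nabla I = 0 follows since I = J K.
   (2) Adding a pairing for which I, J, K are skew-adjoint and a map D, the torsion equals the claimed
       expression  I D<X,IY> + J D<X,JY> + K D<X,KY>  plus an explicit combination of values of
       N_{I,J} and of the symmetry defect  x o y + y o x - 2 D<x,y>.
   (3) For a Courant algebroid with an almost hypercomplex structure, the symmetry defect vanishes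
       (an axiom), the layers above apply, and the Leibniz rules of the Dorfman bracket (in particular
       the derived left Leibniz rule) show that nabla is a hypercomplex connection. *)

lemma cov_deriv_comp:
  assumes "\<And>X Y. cov_deriv nabla P X Y = 0" and "\<And>X Y. cov_deriv nabla Q X Y = 0"
  shows "cov_deriv nabla (P \<circ> Q) X Y = 0"
  using assms by (simp add: cov_deriv_def)

definition sym_defect ::
  "('s::real_vector \<Rightarrow> 's \<Rightarrow> 's) \<Rightarrow> ('s \<Rightarrow> 's \<Rightarrow> 'f) \<Rightarrow> ('f \<Rightarrow> 's) \<Rightarrow> 's \<Rightarrow> 's \<Rightarrow> 's" where
  "sym_defect dorf pair D X Y = dorf X Y + dorf Y X - 2 *\<^sub>R D (pair X Y)"

locale quaternionic_bracket =
  fixes I J K :: "'s::real_vector \<Rightarrow> 's"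
    and dorf :: "'s \<Rightarrow> 's \<Rightarrow> 's"
  assumes linear_I: "linear I" and linear_J: "linear J" and linear_K: "linear K"
    and I_sq: "\<And>x. I (I x) = - x" and J_sq: "\<And>x. J (J x) = - x" and K_sq: "\<And>x. K (K x) = - x"
    and IJK: "\<And>x. I (J (K x)) = - x"
    and dorf_linear_left: "\<And>y. linear (\<lambda>x. dorf x y)"
    and dorf_linear_right: "\<And>x. linear (dorf x)"
begin

lemmas lin_rules =
  linear_add[OF linear_I] linear_scale[OF linear_I] linear_neg[OF linear_I]
  linear_diff[OF linear_I] linear_0[OF linear_I]
  linear_add[OF linear_J] linear_scale[OF linear_J] linear_neg[OF linear_J]
  linear_diff[OF linear_J] linear_0[OF linear_J]
  linear_add[OF linear_K] linear_scale[OF linear_K] linear_neg[OF linear_K]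
  linear_diff[OF linear_K] linear_0[OF linear_K]
  linear_add[OF dorf_linear_left] linear_scale[OF dorf_linear_left]
  linear_neg[OF dorf_linear_left] linear_diff[OF dorf_linear_left] linear_0[OF dorf_linear_left]
  linear_add[OF dorf_linear_right] linear_scale[OF dorf_linear_right]
  linear_neg[OF dorf_linear_right] linear_diff[OF dorf_linear_right] linear_0[OF dorf_linear_right]

lemma JK: "J (K x) = I x"
proof -
  have "I (I (J (K x))) = I (- x)" by (simp add: IJK)
  then show ?thesis by (simp add: I_sq lin_rules)
qed

lemma IJ: "I (J x) = K x"
  using IJK[of "- K x"] by (simp add: K_sq lin_rules)

lemma JI: "J (I x) = - K x"
  using JK[of x] J_sq[of "K x"] by simp

lemma KJ: "K (J x) = - I x"
  using IJ[of "J x"] J_sq[of x] by (simp add: lin_rules)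

lemma IK: "I (K x) = - J x"
  using IJ[of x] I_sq[of "J x"] by simp

lemma KI: "K (I x) = J x"
  using IJ[of "I x"] JI[of x] IK[of x] by (simp add: lin_rules)

lemmas quaternion_rules = I_sq J_sq K_sq IJ JK KI JI KJ IK

lemma cov_deriv_J: "cov_deriv (hc_nabla dorf I J K) J X Y = 0"
  by (simp add: cov_deriv_def hc_nabla_def quaternion_rules lin_rules algebra_simps)

lemma cov_deriv_K:
  "cov_deriv (hc_nabla dorf I J K) K X Y =
     (1/2) *\<^sub>R (I (nijenhuis dorf I J (I Y) X) - nijenhuis dorf I J Y X)"
  by (simp add: cov_deriv_def hc_nabla_def nijenhuis_def quaternion_rules lin_rules algebra_simps)

context
  assumes integrable: "\<And>X Y. nijenhuis dorf I J X Y = 0"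
begin

lemma cov_deriv_K_zero: "cov_deriv (hc_nabla dorf I J K) K X Y = 0"
  by (simp add: cov_deriv_K integrable lin_rules)

text \<open>Since \<open>I = JK\<close>, parallelism of \<open>I\<close> is inherited from that of \<open>J\<close> and \<open>K\<close>.\<close>
lemma cov_deriv_I_zero: "cov_deriv (hc_nabla dorf I J K) I X Y = 0"
proof -
  have "cov_deriv (hc_nabla dorf I J K) (J \<circ> K) X Y = 0"
    by (intro cov_deriv_comp cov_deriv_J cov_deriv_K_zero)
  moreover have "cov_deriv (hc_nabla dorf I J K) (J \<circ> K) X Y = cov_deriv (hc_nabla dorf I J K) I X Y"
    by (simp add: cov_deriv_def JK)
  ultimately show ?thesis by simp
qed

end

end

locale quaternionic_bracket_pairing = quaternionic_bracket I J K dorf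
  for I J K :: "'s::real_vector \<Rightarrow> 's" and dorf +
  fixes pair :: "'s \<Rightarrow> 's \<Rightarrow> 'f::ab_group_add" and D :: "'f \<Rightarrow> 's"
  assumes I_skew: "\<And>x y. pair (I x) y = - pair x (I y)"
    and J_skew: "\<And>x y. pair (J x) y = - pair x (J y)"
    and K_skew: "\<And>x y. pair (K x) y = - pair x (K y)"
    and pair_minus_right: "\<And>x y. pair x (- y) = - pair x y"
    and D_minus: "\<And>f. D (- f) = - D f"
begin

lemma torsion_formula:
  "torsion dorf (hc_nabla dorf I J K) X Y =
     I (D (pair X (I Y))) + J (D (pair X (J Y))) + K (D (pair X (K Y)))
   + (1/2) *\<^sub>R (sym_defect dorf pair D X Y - sym_defect dorf pair D (J X) (J Y)
       - I (sym_defect dorf pair D (J X) (K Y)) + J (sym_defect dorf pair D X (J Y))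
       + K (sym_defect dorf pair D X (K Y))
       - nijenhuis dorf I J X (K Y) + I (nijenhuis dorf I J (J Y) X)
       + J (nijenhuis dorf I J X (I Y)))"
  by (simp add: torsion_def courant_bracket_def hc_nabla_def nijenhuis_def sym_defect_def
      quaternion_rules lin_rules I_skew J_skew K_skew pair_minus_right D_minus algebra_simps)

end

locale courant_algebroid_sections =
  fixes sm :: "'f::{comm_ring_1,real_algebra_1} \<Rightarrow> 's::real_vector \<Rightarrow> 's"
    and rho :: "'s \<Rightarrow> 'f \<Rightarrow> 'f"
    and pair :: "'s \<Rightarrow> 's \<Rightarrow> 'f"
    and dorf :: "'s \<Rightarrow> 's \<Rightarrow> 's"
    and D :: "'f \<Rightarrow> 's"
  assumes CA: "courant_algebroid sm rho pair dorf D"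
begin

lemma module_axioms:
  shows sm_add_left: "sm (a + b) x = sm a x + sm b x"
    and sm_add_right: "sm a (x + y) = sm a x + sm a y"
    and sm_mult: "sm (a * b) x = sm a (sm b x)"
    and sm_of_real: "sm (of_real r) x = r *\<^sub>R x"
  using CA unfolding courant_algebroid_def is_fmodule_def by auto

lemma anchor_axioms:
  shows rho_add: "rho x (f + g) = rho x f + rho x g"
    and rho_mult: "rho x (f * g) = f * rho x g + g * rho x f"
  using CA unfolding courant_algebroid_def is_derivation_def by auto

lemma pairing_axioms:
  shows pair_comm: "pair x y = pair y x"
    and pair_add_left: "pair (x + x') y = pair x y + pair x' y"
    and pair_sm_left: "pair (sm f x) y = f * pair x y"
    and pair_nondegenerate: "(\<And>y. pair x y = 0) \<Longrightarrow> x = 0"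
    and pair_D: "pair (D f) x = (1/2) *\<^sub>R rho x f"
  using CA unfolding courant_algebroid_def by auto

lemma dorfman_axioms:
  shows dorf_add_left: "dorf (x + x') y = dorf x y + dorf x' y"
    and dorf_add_right: "dorf x (y + y') = dorf x y + dorf x y'"
    and dorf_scale_left: "dorf (r *\<^sub>R x) y = r *\<^sub>R dorf x y"
    and dorf_scale_right: "dorf x (r *\<^sub>R y) = r *\<^sub>R dorf x y"
    and dorf_sm_right: "dorf x (sm f y) = sm (rho x f) y + sm f (dorf x y)"
    and dorf_symmetric_part: "dorf x y + dorf y x = 2 *\<^sub>R D (pair x y)"
  using CA unfolding courant_algebroid_def by auto

lemma sm_additive_left: "additive (\<lambda>a. sm a x)"
  by (rule additive.intro) (rule sm_add_left)

lemma sm_additive_right: "additive (sm a)"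
  by (rule additive.intro) (rule sm_add_right)

lemma pair_additive_left: "additive (\<lambda>x. pair x y)"
  by (rule additive.intro) (rule pair_add_left)

lemma pair_additive_right: "additive (pair x)"
  by (rule additive.intro) (simp add: pair_comm[of x] pair_add_left)

lemma sm_scaleR: "sm a (r *\<^sub>R x) = r *\<^sub>R sm a x"
  by (metis mult.commute sm_mult sm_of_real)

lemma eq_by_pairing:
  assumes "\<And>y. pair x y = pair x' y"
  shows "x = x'"
proof -
  have "pair (x - x') y = 0" for y
    using assms additive.diff[OF pair_additive_left] by simp
  then show ?thesis using pair_nondegenerate[of "x - x'"] by simp
qed

text \<open>\<open>D\<close> is additive and satisfies the Leibniz rule, because \<open>\<rho>(x)\<close> is a derivation.\<close>
lemma D_add: "D (f + g) = D f + D g"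
  by (rule eq_by_pairing) (simp add: pair_D pair_add_left rho_add scaleR_add_right)

lemma D_mult: "D (f * g) = sm f (D g) + sm g (D f)"
  by (rule eq_by_pairing) (simp add: pair_D pair_add_left pair_sm_left rho_mult scaleR_add_right)

text \<open>The Leibniz rule in the first argument, derived from the one in the second argument
  and the symmetric part of the Dorfman bracket.\<close>
lemma dorf_sm_left:
  "dorf (sm f x) y = sm f (dorf x y) - sm (rho y f) x + 2 *\<^sub>R sm (pair x y) (D f)"
proof -
  have "dorf (sm f x) y = 2 *\<^sub>R D (f * pair x y) - dorf y (sm f x)"
    using dorf_symmetric_part[of "sm f x" y] by (simp add: pair_sm_left algebra_simps)
  also have "\<dots> = 2 *\<^sub>R (sm f (D (pair x y)) + sm (pair x y) (D f)) - sm (rho y f) x - sm f (dorf y x)"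
    by (simp add: D_mult dorf_sm_right)
  also have "dorf y x = 2 *\<^sub>R D (pair x y) - dorf x y"
    using dorf_symmetric_part[of x y] by (simp add: algebra_simps)
  finally show ?thesis
    by (simp add: additive.diff[OF sm_additive_right] sm_add_right sm_scaleR algebra_simps)
qed

lemma sym_defect_zero: "sym_defect dorf pair D x y = 0"
  by (simp add: sym_defect_def dorf_symmetric_part)

lemma dorf_linear_left: "linear (\<lambda>x. dorf x y)"
  by (rule linearI) (simp_all add: dorf_add_left dorf_scale_left)

lemma dorf_linear_right: "linear (dorf x)"
  by (rule linearI) (simp_all add: dorf_add_right dorf_scale_right)

lemma endo_linear:
  assumes "\<And>x y. P (x + y) = P x + P y" and "\<And>f x. P (sm f x) = sm f (P x)"
  shows "linear P"
proof (rule linearI)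
  show "P (r *\<^sub>R x) = r *\<^sub>R P x" for r x
    using assms(2)[of "of_real r" x] by (simp add: sm_of_real)
qed (rule assms(1))

text \<open>An orthogonal map squaring to \<open>-1\<close> is skew-adjoint:
  \<open>\<langle>Px, y\<rangle> = \<langle>PPx, Py\<rangle> = -\<langle>x, Py\<rangle>\<close>.\<close>
lemma orthogonal_square_minus_skew:
  assumes orth: "\<And>x y. pair (P x) (P y) = pair x y" and sq: "\<And>x. P (P x) = - x"
  shows "pair (P x) y = - pair x (P y)"
  using orth[of "P x" y] by (simp add: sq additive.minus[OF pair_additive_left])

end

text \<open>Normalisation aid: \<open>(1/2) a + (1/2) a = a\<close>, which \<open>algebra_simps\<close> alone does not see.\<close>
lemma half_plus_half:
  fixes a b :: "'a::real_vector"
  shows "(1/2) *\<^sub>R a + (1/2) *\<^sub>R a = a" and "(1/2) *\<^sub>R a + ((1/2) *\<^sub>R a + b) = a + b"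
  by (simp_all add: scaleR_add_left[symmetric])

locale courant_hypercomplex = courant_algebroid_sections sm rho pair dorf D
  for sm :: "'f::{comm_ring_1,real_algebra_1} \<Rightarrow> 's::real_vector \<Rightarrow> 's"
    and rho pair dorf D +
  fixes I J K :: "'s \<Rightarrow> 's"
  assumes HC: "almost_hypercomplex sm pair I J K"
begin

lemma hypercomplex_axioms:
  shows "I (x + y) = I x + I y" and "J (x + y) = J x + J y" and "K (x + y) = K x + K y"
    and I_sm: "I (sm f x) = sm f (I x)" and J_sm: "J (sm f x) = sm f (J x)"
    and K_sm: "K (sm f x) = sm f (K x)"
    and "pair (I x) (I y) = pair x y" and "pair (J x) (J y) = pair x y"
    and "pair (K x) (K y) = pair x y"
    and "I (I x) = - x" and "J (J x) = - x" and "K (K x) = - x" and "I (J (K x)) = - x"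
  using HC unfolding almost_hypercomplex_def is_endo_def is_orthogonal_def by auto

sublocale quaternionic_bracket_pairing I J K dorf pair D
proof (intro quaternionic_bracket_pairing.intro quaternionic_bracket.intro
    quaternionic_bracket_pairing_axioms.intro)
  show "linear I" "linear J" "linear K"
    by (rule endo_linear; simp add: hypercomplex_axioms)+
  show "pair (I x) y = - pair x (I y)" "pair (J x) y = - pair x (J y)"
    "pair (K x) y = - pair x (K y)" for x y
    by (rule orthogonal_square_minus_skew; simp add: hypercomplex_axioms)+
  show "D (- f) = - D f" for f
    by (rule additive.minus) (rule additive.intro, rule D_add)
qed (simp_all add: hypercomplex_axioms dorf_linear_left dorf_linear_right
      additive.minus[OF pair_additive_right])

lemmas sm_rules = sm_add_left sm_add_right additive.minus[OF sm_additive_left]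
  additive.diff[OF sm_additive_left] additive.minus[OF sm_additive_right]
  additive.diff[OF sm_additive_right] sm_scaleR sm_mult[symmetric]
  I_sm J_sm K_sm dorf_sm_left dorf_sm_right pair_sm_left D_mult

text \<open>The connection is \<open>C\<^sup>\<infinity>(M)\<close>-linear in \<open>X\<close> and satisfies the hypercomplex Leibniz rule
  in \<open>Y\<close>; the correction term \<open>\<Delta>\<^sub>f\<close> comes from the \<open>D f\<close>-terms of the left Leibniz rule.\<close>
lemma hc_nabla_hypercomplex_connection:
  "hypercomplex_connection sm rho pair D I J K (hc_nabla dorf I J K)"
  unfolding hypercomplex_connection_def
proof (intro conjI allI)
  fix f X Y
  show "hc_nabla dorf I J K (sm f X) Y = sm f (hc_nabla dorf I J K X Y)"
    by (simp add: hc_nabla_def sm_rules quaternion_rules lin_rules algebra_simps)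
  show "hc_nabla dorf I J K X (sm f Y) =
      sm (rho X f) Y + sm f (hc_nabla dorf I J K X Y) - Delta sm pair D I J K f X Y"
    using pair_comm[of Y "I X"] pair_comm[of Y "J X"] pair_comm[of Y "K X"] pair_comm[of Y X]
    by (simp add: hc_nabla_def Delta_def sm_rules quaternion_rules lin_rules I_skew J_skew K_skew
        additive.minus[OF pair_additive_left] pair_minus_right half_plus_half algebra_simps)
qed (simp_all add: hc_nabla_def lin_rules algebra_simps)

text \<open>In a Courant algebroid the symmetry defects vanish, so with \<open>N\<^sub>I\<^sub>,\<^sub>J = 0\<close> the torsion
  is exactly the claimed expression.\<close>
lemma torsion_hc_nabla:
  assumes "\<And>X Y. nijenhuis dorf I J X Y = 0"
  shows "torsion dorf (hc_nabla dorf I J K) X Y =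
    I (D (pair X (I Y))) + J (D (pair X (J Y))) + K (D (pair X (K Y)))"
  by (simp add: torsion_formula sym_defect_zero assms lin_rules)

end

theorem mainTheorem5:
  fixes sm :: "'f::{comm_ring_1,real_algebra_1} \<Rightarrow> 's::real_vector \<Rightarrow> 's"
    and rho :: "'s \<Rightarrow> 'f \<Rightarrow> 'f"
    and pair :: "'s \<Rightarrow> 's \<Rightarrow> 'f"
    and dorf :: "'s \<Rightarrow> 's \<Rightarrow> 's"
    and D :: "'f \<Rightarrow> 's"
    and I J K :: "'s \<Rightarrow> 's"
  assumes CA: "courant_algebroid sm rho pair dorf D"
    and HC: "almost_hypercomplex sm pair I J K"
    and NIJ: "\<forall>X Y. nijenhuis dorf I J X Y = 0"
  shows "hypercomplex_connection sm rho pair D I J K (hc_nabla dorf I J K)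
    \<and> (\<forall>X Y. cov_deriv (hc_nabla dorf I J K) I X Y = 0)
    \<and> (\<forall>X Y. cov_deriv (hc_nabla dorf I J K) J X Y = 0)
    \<and> (\<forall>X Y. cov_deriv (hc_nabla dorf I J K) K X Y = 0)
    \<and> (\<forall>X Y. torsion dorf (hc_nabla dorf I J K) X Y =
          I (D (pair X (I Y))) + J (D (pair X (J Y))) + K (D (pair X (K Y))))"
proof -
  interpret courant_hypercomplex sm rho pair dorf D I J K
    by unfold_locales (fact CA, fact HC)
  have integrable: "\<And>X Y. nijenhuis dorf I J X Y = 0"
    using NIJ by blast
  show ?thesis
    using hc_nabla_hypercomplex_connection cov_deriv_I_zero[OF integrable] cov_deriv_J
      cov_deriv_K_zero[OF integrable] torsion_hc_nabla[OF integrable]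
    by blast
qed

end
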